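(* Let $\mathcal P$ be a path and let $\{p_1,\dots,p_m\}$ and $\{q_1,\dots,q_k\}$ be two different sets of plaquettes in $\mathcal B_{\mathcal P}$ such that $\bigoplus_{i=1}^m\vec\alpha^{p_i}=\bigoplus_{j=1}^k\vec\alpha^{q_j}$ when restricted to $\mathrm{Conn}(\mathcal P)$. Then for every configuration $\vec i$, $\theta_{\mathcal P}(\vec i,p_1,\dots,p_m)=\theta_{\mathcal P}(\vec i,q_1,\dots,q_k)$.
   Context: Let $\Lambda$ be a hexagonal (honeycomb) lattice embedded in a closed orientable surface, with one qubit on each edge. For an edge $j$, $\sigma^x_j,\sigma^z_j$ denote the Pauli operators on qubit $j$ and $n^{\pm}_j=\tfrac12(1\pm\sigma^z_j)$. A (string) configuration $\vec i$ is a computational basis state, viewed as a bit string assigning $0$ (empty) or $1$ (occupied) to each edge; $\vec i\oplus\vec\alpha$ is bitwise addition mod 2. For a hexagonal plaquette $p$, label its boundary edges $1,\dots,6$ cyclically (index $0$ means $6$) and its outgoing edges so that edge $12$ meets edges $6,1$; edge $7$ meets $1,2$; edge $8$ meets $2,3$; edge $9$ meets $3,4$; edge $10$ meets $4,5$; edge $11$ meets $5,6$. Define $B_p=\Big(\prod_{j=1}^6\sigma^x_j\Big)\Big(\prod_{j=1}^6(-1)^{n^-_{j-1}n^+_j}\Big)\,i^{n^-_{12}(n^-_1n^-_6-n^+_1n^+_6)}\,i^{n^-_7(n^+_1n^+_2-n^-_1n^-_2)}\,i^{n^+_8(n^-_2n^+_3-n^+_2n^-_3)}\,i^{n^-_9(n^-_3n^-_4-n^+_3n^+_4)}\,i^{n^-_{10}(n^+_4n^+_5-n^-_4n^-_5)}\,i^{n^+_{11}(n^-_5n^+_6-n^+_5n^-_6)}$;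 all $B_p$ commute pairwise and square to the identity, and the product of all $B_p$ over the lattice is the identity. Write $B_p=\prod_{j\in\partial p}\sigma^x_j\sum_{\vec i}b_p(\vec i)|\vec i\rangle\langle\vec i|$, defining the phase $b_p(\vec i)$. Let $\vec\alpha^p$ be the configuration occupied exactly on the boundary edges of $p$. A path $\mathcal P$ is a sequence of edges forming a walk; $\vec\alpha^{\mathcal P}$ is the mod-2 sum of the indicators of its edges and $X_{\mathcal P}$ the product of $\sigma^x$ over its edges. $\mathrm{Conn}(\mathcal P)$ is the set of edges of $\mathcal P$ together with all edges sharing a vertex with an edge of $\mathcal P$; $\mathcal B_{\mathcal P}$ is the set of plaquettes with at least one boundary edge in $\mathrm{Conn}(\mathcal P)$. Define $\theta_{\mathcal P}(\vec i,p_1,\dots,p_m)=\prod_{k=1}^m \frac{b_{p_k}(\vec i\oplus\vec\alpha^{\mathcal P}\oplus\bigoplus_{j<k}\vec\alpha^{p_j})}{b_{p_k}(\vec i\oplus\bigoplus_{j<k}\vec\alpha^{p_j})}$ for configurations $\vec i$ on the whole lattice. *)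

theory Defs
  imports Complex_Main
begin

text \<open>For a plaquette p,
  lab p j (j = 1..6) are its boundary edges in cyclic order and
  lab p (6+j) (j = 1..6) is the outgoing edge at the corner where boundary
  edges j and j+1 meet (index 7 means 1), i.e. edge 7 meets 1,2, ..., edge 12 meets 6,1.\<close>

definition nxt6 :: "nat \<Rightarrow> nat" where
  "nxt6 j = (if j = 6 then 1 else j + 1)"

definition prv6 :: "nat \<Rightarrow> nat" where
  "prv6 j = (if j = 1 then 6 else j - 1)"

definition symd :: "'a set \<Rightarrow> 'a set \<Rightarrow> 'a set" where
  "symd A B = (A - B) \<union> (B - A)"

definition honeycomb ::
  "'v set \<Rightarrow> 'e set \<Rightarrow> 'p set \<Rightarrow> ('e \<Rightarrow> 'v set) \<Rightarrow> ('p \<Rightarrow> nat \<Rightarrow> 'e) \<Rightarrow> bool" where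
  "honeycomb V E P ends lab \<longleftrightarrow>
     finite V \<and> finite E \<and> finite P \<and> P \<noteq> {} \<and>
     (\<forall>e\<in>E. ends e \<subseteq> V \<and> card (ends e) = 2) \<and>
     (\<forall>v\<in>V. card {e\<in>E. v \<in> ends e} = 3) \<and>
     (\<forall>p\<in>P. lab p ` {1..12} \<subseteq> E \<and> inj_on (lab p) {1..12} \<and>
        (\<forall>j\<in>{1..6}. ends (lab p (j + 6)) \<inter> ends (lab p j) \<inter> ends (lab p (nxt6 j)) \<noteq> {})) \<and>
     (\<forall>e\<in>E. card {p\<in>P. e \<in> lab p ` {1..6}} = 2) \<and>
     \<comment> \<open>orientability: the cyclic labellings induce opposite directions on shared edges\<close>
     (\<forall>p\<in>P. \<forall>q\<in>P. \<forall>j\<in>{1..6}. \<forall>k\<in>{1..6}. p \<noteq> q \<and> lab p j = lab q k \<longrightarrow>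
        ends (lab p j) \<inter> ends (lab p (nxt6 j)) \<noteq> ends (lab q k) \<inter> ends (lab q (nxt6 k))) \<and>
     \<comment> \<open>connectedness\<close>
     (\<forall>u\<in>V. \<forall>v\<in>V. (u, v) \<in> {(x, y). \<exists>e\<in>E. ends e = {x, y}}\<^sup>*)"

text \<open>A configuration is the set of occupied edges (a subset of E); bitwise
  addition mod 2 is symmetric difference.  n^-_k = 1 iff edge k is occupied
  (sigma^z = -1 on |1>), n^+_k = 1 iff edge k is empty.\<close>

definition alpha_p :: "('p \<Rightarrow> nat \<Rightarrow> 'e) \<Rightarrow> 'p \<Rightarrow> 'e set" where
  "alpha_p lab p = lab p ` {1..6}"

definition bphase :: "('p \<Rightarrow> nat \<Rightarrow> 'e) \<Rightarrow> 'p \<Rightarrow> 'e set \<Rightarrow> complex" where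
  "bphase lab p i =
     (let nm = (\<lambda>k. if lab p k \<in> i then (1::int) else 0);
          np = (\<lambda>k. if lab p k \<in> i then (0::int) else 1)
      in (\<Prod>j\<in>{1..6}. (-1::complex) powi (nm (prv6 j) * np j))
         * \<i> powi (nm 12 * (nm 1 * nm 6 - np 1 * np 6))
         * \<i> powi (nm 7 * (np 1 * np 2 - nm 1 * nm 2))
         * \<i> powi (np 8 * (nm 2 * np 3 - np 2 * nm 3))
         * \<i> powi (nm 9 * (nm 3 * nm 4 - np 3 * np 4))
         * \<i> powi (nm 10 * (np 4 * np 5 - nm 4 * nm 5))
         * \<i> powi (np 11 * (nm 5 * np 6 - np 5 * nm 6)))"

text \<open>B_p |i> = b_p(i) |i + alpha^p>.  Phase of B_{p_m} ... B_{p_1} |i> (p_1 applied first).\<close>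

fun prodphase :: "('p \<Rightarrow> nat \<Rightarrow> 'e) \<Rightarrow> 'p list \<Rightarrow> 'e set \<Rightarrow> complex" where
  "prodphase lab [] i = 1"
| "prodphase lab (p # ps) i = bphase lab p i * prodphase lab ps (symd i (alpha_p lab p))"

definition B_commute :: "'e set \<Rightarrow> 'p set \<Rightarrow> ('p \<Rightarrow> nat \<Rightarrow> 'e) \<Rightarrow> bool" where
  "B_commute E P lab \<longleftrightarrow> (\<forall>p\<in>P. \<forall>q\<in>P. \<forall>i. i \<subseteq> E \<longrightarrow>
     bphase lab q (symd i (alpha_p lab p)) * bphase lab p i =
     bphase lab p (symd i (alpha_p lab q)) * bphase lab q i)"

definition B_square_id :: "'e set \<Rightarrow> 'p set \<Rightarrow> ('p \<Rightarrow> nat \<Rightarrow> 'e) \<Rightarrow> bool" where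
  "B_square_id E P lab \<longleftrightarrow> (\<forall>p\<in>P. \<forall>i. i \<subseteq> E \<longrightarrow>
     bphase lab p (symd i (alpha_p lab p)) * bphase lab p i = 1)"

definition xsum :: "('p \<Rightarrow> 'e set) \<Rightarrow> 'p list \<Rightarrow> 'e set" where
  "xsum a ps = foldr (\<lambda>p acc. symd (a p) acc) ps {}"

definition B_product_id :: "'e set \<Rightarrow> 'p set \<Rightarrow> ('p \<Rightarrow> nat \<Rightarrow> 'e) \<Rightarrow> bool" where
  "B_product_id E P lab \<longleftrightarrow> (\<forall>ps. distinct ps \<and> set ps = P \<longrightarrow>
     xsum (alpha_p lab) ps = {} \<and> (\<forall>i. i \<subseteq> E \<longrightarrow> prodphase lab ps i = 1))"

definition is_walk :: "'e set \<Rightarrow> ('e \<Rightarrow> 'v set) \<Rightarrow> 'e list \<Rightarrow> bool" where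
  "is_walk E ends es \<longleftrightarrow> (\<exists>vs. length vs = length es + 1 \<and>
     (\<forall>k < length es. es ! k \<in> E \<and> ends (es ! k) = {vs ! k, vs ! Suc k}))"

definition alpha_path :: "'e list \<Rightarrow> 'e set" where
  "alpha_path es = {e. odd (length (filter (\<lambda>f. f = e) es))}"

definition Conn :: "'e set \<Rightarrow> ('e \<Rightarrow> 'v set) \<Rightarrow> 'e list \<Rightarrow> 'e set" where
  "Conn E ends es = set es \<union> {f\<in>E. \<exists>e\<in>set es. ends e \<inter> ends f \<noteq> {}}"

definition Bplaq :: "'e set \<Rightarrow> 'p set \<Rightarrow> ('e \<Rightarrow> 'v set) \<Rightarrow> ('p \<Rightarrow> nat \<Rightarrow> 'e) \<Rightarrow> 'e list \<Rightarrow> 'p set" where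
  "Bplaq E P ends lab es = {p\<in>P. alpha_p lab p \<inter> Conn E ends es \<noteq> {}}"

definition theta :: "('p \<Rightarrow> nat \<Rightarrow> 'e) \<Rightarrow> 'e list \<Rightarrow> 'e set \<Rightarrow> 'p list \<Rightarrow> complex" where
  "theta lab es i ps =
     (\<Prod>k<length ps.
        bphase lab (ps ! k) (symd (symd i (alpha_path es)) (xsum (alpha_p lab) (take k ps)))
        / bphase lab (ps ! k) (symd i (xsum (alpha_p lab) (take k ps))))"

end

theory Submission
  imports Defs "HOL-Library.Multiset"
begin

text \<open>Write \<open>g(L, x)\<close> for the phase of the product of the \<open>B_p\<close> along the list \<open>L\<close> started at
  \<open>x\<close>, so that \<open>\<theta>\<close> is the ratio \<open>g(L, x + \<alpha>) / g(L, x)\<close> with \<open>\<alpha>\<close> the indicator of the path.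
  Since the \<open>B_p\<close> commute and square to the identity, \<open>g\<close> only depends on the multiset of plaquettes, and the plaquettes common to both
  lists contribute the same factor to both ratios.  It therefore suffices that the product over
  the symmetric difference \<open>S\<close> of the two plaquette sets is insensitive to flipping the path
  edges.  The hypothesis says that \<open>\<Sum>\<^sub>p\<^sub>\<in>\<^sub>S \<alpha>\<^sup>p\<close> vanishes on \<open>Conn\<close>, i.e. that the two faces of
  every edge of \<open>Conn\<close> lie both in \<open>S\<close> or both outside.  The honeycomb geometry then forces
  every plaquette whose operator reads a path edge \<open>e\<close> (as boundary or outgoing edge) to lie on
  the same side of \<open>S\<close>.  If they lie outside, the product over \<open>S\<close> does not read \<open>e\<close> at all;
  if they lie inside, the product over all plaquettes being the identity expresses the product
  over \<open>S\<close> through the product over the complement, which does not read \<open>e\<close>.\<close>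

lemma symd_assoc: "symd (symd a b) c = symd a (symd b c)"
  by (auto simp: symd_def)

lemma symd_commute: "symd a b = symd b a"
  by (auto simp: symd_def)

lemma symd_left_commute: "symd a (symd b c) = symd b (symd a c)"
  by (auto simp: symd_def)

lemma symd_empty [simp]: "symd a {} = a" "symd {} a = a"
  by (auto simp: symd_def)

lemma symd_cancel [simp]: "symd (symd a b) b = a"
  by (auto simp: symd_def)

lemma symd_Int_cong: "x \<inter> S = y \<inter> S \<Longrightarrow> symd x a \<inter> S = symd y a \<inter> S"
  unfolding symd_def by blast

lemma xsum_Nil [simp]: "xsum a [] = {}"
  by (simp add: xsum_def)

lemma xsum_Cons [simp]: "xsum a (p # ps) = symd (a p) (xsum a ps)"
  by (simp add: xsum_def)

lemma xsum_eq_odd_count: "xsum a ps = {f. odd (length (filter (\<lambda>p. f \<in> a p) ps))}"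
  by (induction ps) (auto simp: symd_def)

lemma alpha_path_subset: "alpha_path es \<subseteq> set es"
proof
  fix x assume "x \<in> alpha_path es"
  then have "filter (\<lambda>f. f = x) es \<noteq> []"
    unfolding alpha_path_def by auto
  then show "x \<in> set es"
    by (auto simp: filter_empty_conv)
qed

lemma Conn_subset: "set es \<subseteq> E \<Longrightarrow> Conn E ends es \<subseteq> E"
  unfolding Conn_def by blast

lemma nxt6_prv6:
  assumes "m \<in> {1..6::nat}"
  shows "nxt6 m \<in> {1..6}" "prv6 m \<in> {1..6}" "nxt6 (prv6 m) = m"
    "nxt6 m \<noteq> m" "prv6 m \<noteq> m" "nxt6 m \<noteq> prv6 m"
  using assms by (auto simp: nxt6_def prv6_def)

lemma atLeastAtMost_12_split: "{1..12::nat} = {1..6} \<union> (\<lambda>j. j + 6) ` {1..6}"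
proof -
  have "x \<in> (\<lambda>j. j + 6) ` {1..6}" if "7 \<le> x" "x \<le> 12" for x :: nat
    using that by (intro image_eqI[of _ _ "x - 6"]) auto
  then show ?thesis by fastforce
qed

subsection \<open>Locality of the phases\<close>

definition plaq_support :: "('p \<Rightarrow> nat \<Rightarrow> 'e) \<Rightarrow> 'p \<Rightarrow> 'e set" where
  "plaq_support lab p = lab p ` {1..12}"

lemma plaq_support_eq: "plaq_support lab p = alpha_p lab p \<union> (\<lambda>j. lab p (j + 6)) ` {1..6}"
  unfolding plaq_support_def alpha_p_def atLeastAtMost_12_split image_Un image_image ..

lemma alpha_p_subset_plaq_support: "alpha_p lab p \<subseteq> plaq_support lab p"
  unfolding alpha_p_def plaq_support_def by auto

lemma bphase_cong_support:
  assumes "x \<inter> plaq_support lab p = y \<inter> plaq_support lab p"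
  shows "bphase lab p x = bphase lab p y"
proof -
  have "(lab p k \<in> x) = (lab p k \<in> y)" if "k \<in> {1..12}" for k
    using assms that unfolding plaq_support_def by blast
  moreover have "{1..6::nat} = {1,2,3,4,5,6}" by auto
  ultimately show ?thesis
    unfolding bphase_def Let_def by (simp add: prv6_def)
qed

lemma bphase_nonzero: "bphase lab p x \<noteq> 0"
  unfolding bphase_def Let_def by (simp add: power_int_def)

lemma prodphase_nonzero: "prodphase lab ps x \<noteq> 0"
  by (induction ps arbitrary: x) (auto simp: bphase_nonzero)

lemma prodphase_append:
  "prodphase lab (ps @ qs) x = prodphase lab ps x * prodphase lab qs (symd x (xsum (alpha_p lab) ps))"
  by (induction ps arbitrary: x) (auto simp: symd_assoc)

lemma prodphase_cong_support:
  assumes "\<And>p. p \<in> set ps \<Longrightarrow> x \<inter> plaq_support lab p = y \<inter> plaq_support lab p"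
  shows "prodphase lab ps x = prodphase lab ps y"
  using assms
proof (induction ps arbitrary: x y)
  case (Cons p ps)
  have "prodphase lab ps (symd x (alpha_p lab p)) = prodphase lab ps (symd y (alpha_p lab p))"
    by (intro Cons.IH symd_Int_cong) (simp add: Cons.prems)
  moreover have "bphase lab p x = bphase lab p y"
    by (rule bphase_cong_support) (simp add: Cons.prems)
  ultimately show ?case
    by simp
qed simp

lemma prodphase_eq_prod:
  "prodphase lab ps x = (\<Prod>k<length ps. bphase lab (ps ! k) (symd x (xsum (alpha_p lab) (take k ps))))"
  by (induction ps arbitrary: x) (simp_all add: prod.lessThan_Suc_shift symd_assoc del: prod.lessThan_Suc)

lemma theta_eq_prodphase_ratio:
  "theta lab es x ps = prodphase lab ps (symd x (alpha_path es)) / prodphase lab ps x"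
  unfolding theta_def prodphase_eq_prod by (simp add: prod_dividef)

subsection \<open>The algebra of the plaquette operators\<close>

locale honeycomb_plaquettes =
  fixes V :: "'v set" and E :: "'e set" and P :: "'p set"
    and ends :: "'e \<Rightarrow> 'v set" and lab :: "'p \<Rightarrow> nat \<Rightarrow> 'e"
  assumes honeycomb: "honeycomb V E P ends lab"
    and commute: "B_commute E P lab"
    and square: "B_square_id E P lab"
    and product: "B_product_id E P lab"
begin

lemma finite_P: "finite P"
  using honeycomb unfolding honeycomb_def by blast

lemma finite_E: "finite E"
  using honeycomb unfolding honeycomb_def by blast

lemma lab_in_E: "p \<in> P \<Longrightarrow> k \<in> {1..12} \<Longrightarrow> lab p k \<in> E"
  using honeycomb unfolding honeycomb_def by blast

lemma plaq_support_subset_E: "p \<in> P \<Longrightarrow> plaq_support lab p \<subseteq> E"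
  unfolding plaq_support_def using lab_in_E by blast

lemma bphase_inter_E:
  assumes "p \<in> P"
  shows "bphase lab p (x \<inter> E) = bphase lab p x"
  by (rule bphase_cong_support) (use plaq_support_subset_E[OF assms] in auto)

lemma bphase_symd_inter_E:
  assumes "p \<in> P" "q \<in> P"
  shows "bphase lab q (symd (x \<inter> E) (alpha_p lab p)) = bphase lab q (symd x (alpha_p lab p))"
proof -
  have "alpha_p lab p \<subseteq> E"
    using alpha_p_subset_plaq_support plaq_support_subset_E[OF assms(1)] by (rule order_trans)
  then have "symd (x \<inter> E) (alpha_p lab p) = symd x (alpha_p lab p) \<inter> E"
    unfolding symd_def by blast
  then show ?thesis
    using bphase_inter_E[OF assms(2)] by simp
qed

text \<open>The operator identities are assumed for configurations \<open>x \<subseteq> E\<close> only; since the phases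
  only read edges of \<open>E\<close>, they hold for arbitrary sets.\<close>

lemma bphase_commute:
  assumes "p \<in> P" "q \<in> P"
  shows "bphase lab q (symd x (alpha_p lab p)) * bphase lab p x =
         bphase lab p (symd x (alpha_p lab q)) * bphase lab q x"
  using commute assms bphase_inter_E bphase_symd_inter_E
  unfolding B_commute_def by (metis inf_le2)

lemma bphase_square:
  assumes "p \<in> P"
  shows "bphase lab p (symd x (alpha_p lab p)) * bphase lab p x = 1"
  using square assms bphase_inter_E bphase_symd_inter_E
  unfolding B_square_id_def by (metis inf_le2)

lemma prodphase_all_plaquettes:
  assumes "distinct ps" "set ps = P"
  shows "prodphase lab ps x = 1"
proof -
  have "prodphase lab ps (x \<inter> E) = 1"
    using product assms unfolding B_product_id_def by blast
  moreover have "prodphase lab ps (x \<inter> E) = prodphase lab ps x"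
    by (rule prodphase_cong_support) (use plaq_support_subset_E assms(2) in blast)
  ultimately show ?thesis by simp
qed

lemma prodphase_swap:
  assumes "p \<in> P" "q \<in> P"
  shows "prodphase lab (p # q # ps) x = prodphase lab (q # p # ps) x"
proof -
  have "symd (symd x (alpha_p lab p)) (alpha_p lab q) = symd (symd x (alpha_p lab q)) (alpha_p lab p)"
    by (auto simp: symd_def)
  then show ?thesis
    using bphase_commute[OF assms, of x] by (simp add: mult.assoc[symmetric]) (metis mult.commute)
qed

lemma prodphase_move_to_front:
  "set ps \<subseteq> P \<Longrightarrow> p \<in> set ps \<Longrightarrow> prodphase lab ps x = prodphase lab (p # remove1 p ps) x"
proof (induction ps arbitrary: x)
  case (Cons q ps)
  show ?case
  proof (cases "p = q")
    case False
    then have "p \<in> set ps" using Cons.prems by simp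
    then have "prodphase lab (q # ps) x = prodphase lab (q # p # remove1 p ps) x"
      using Cons by simp
    also have "\<dots> = prodphase lab (p # q # remove1 p ps) x"
      by (rule prodphase_swap) (use Cons.prems \<open>p \<in> set ps\<close> in auto)
    finally show ?thesis using False by simp
  qed simp
qed simp

lemma prodphase_mset_eq:
  "mset ps = mset qs \<Longrightarrow> set ps \<subseteq> P \<Longrightarrow> prodphase lab ps x = prodphase lab qs x"
proof (induction ps arbitrary: qs x)
  case (Cons p ps)
  have qs: "set qs \<subseteq> P" "p \<in> set qs"
    using Cons.prems by (metis list.set_intros(1) set_mset_mset)+
  have rest: "mset ps = mset (remove1 p qs)"
    using Cons.prems(1) by (simp, metis add_mset_remove_trivial)
  have "prodphase lab (p # ps) x = prodphase lab (p # remove1 p qs) x"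
    using Cons.IH[OF rest] Cons.prems(2) by simp
  also have "\<dots> = prodphase lab qs x"
    using prodphase_move_to_front[OF qs] by simp
  finally show ?case .
qed (metis mset_zero_iff_right mset.simps(1))

lemma prodphase_square:
  "set ps \<subseteq> P \<Longrightarrow> prodphase lab ps (symd x (xsum (alpha_p lab) ps)) * prodphase lab ps x = 1"
proof (induction ps arbitrary: x)
  case (Cons p ps)
  let ?a = "alpha_p lab p" and ?X = "xsum (alpha_p lab) ps"
  have P: "p \<in> P" "set ps \<subseteq> P"
    using Cons.prems by auto
  have "prodphase lab (p # ps) (symd x (xsum (alpha_p lab) (p # ps)))
      = prodphase lab (ps @ [p]) (symd x (symd ?a ?X))"
    unfolding xsum_Cons by (rule prodphase_mset_eq) (use Cons.prems in auto)
  also have "\<dots> = prodphase lab ps (symd (symd x ?a) ?X) * bphase lab p (symd x ?a)"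
    by (simp add: prodphase_append symd_assoc symd_left_commute[of ?a])
  finally have "prodphase lab (p # ps) (symd x (xsum (alpha_p lab) (p # ps))) * prodphase lab (p # ps) x
      = (prodphase lab ps (symd (symd x ?a) ?X) * prodphase lab ps (symd x ?a))
        * (bphase lab p (symd x ?a) * bphase lab p x)"
    by (simp add: mult_ac)
  also have "\<dots> = 1"
    by (simp only: Cons.IH[OF P(2)] bphase_square[OF P(1)] mult_1)
  finally show ?case .
qed simp

text \<open>By \<open>prodphase_square\<close>, the product over \<open>fs\<close> started after \<open>fs\<close> is the inverse of the
  product over \<open>fs\<close>; this separates the factors of the product over \<open>ds @ fs\<close>.\<close>

lemma prodphase_ratio_eq_of_append_invariant:
  assumes "set ds \<subseteq> P" "set fs \<subseteq> P"
    and inv: "\<And>y. prodphase lab (ds @ fs) (symd y Z) = prodphase lab (ds @ fs) y"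
  shows "prodphase lab ds (symd x Z) / prodphase lab ds x = prodphase lab fs (symd x Z) / prodphase lab fs x"
proof -
  let ?g = "prodphase lab" and ?X = "xsum (alpha_p lab) fs"
  have swap: "?g (ds @ fs) y = ?g fs y * ?g ds (symd y ?X)" for y
    using prodphase_mset_eq[of "ds @ fs" "fs @ ds" y] assms(1,2) by (simp add: prodphase_append)
  have inverse: "?g fs (symd y ?X) = 1 / ?g fs y" for y
    using prodphase_square[OF assms(2), of y] prodphase_nonzero[of lab fs y] by (simp add: field_simps)
  have "symd (symd (symd x ?X) Z) ?X = symd x Z" "symd (symd x ?X) ?X = x"
    by (auto simp: symd_def)
  then have "?g fs (symd (symd x ?X) Z) * ?g ds (symd x Z) = ?g fs (symd x ?X) * ?g ds x"
    using inv[of "symd x ?X"] by (simp only: swap)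
  moreover have "symd (symd x ?X) Z = symd (symd x Z) ?X"
    by (auto simp: symd_def)
  ultimately show ?thesis
    using prodphase_nonzero[of lab] by (simp add: inverse field_simps)
qed

lemma prodphase_ratio_eq_of_difference_invariant:
  assumes "distinct ps" "distinct qs" "set ps \<subseteq> P" "set qs \<subseteq> P"
    and inv: "\<And>y. prodphase lab (filter (\<lambda>p. p \<notin> set qs) ps @ filter (\<lambda>p. p \<notin> set ps) qs) (symd y Z)
              = prodphase lab (filter (\<lambda>p. p \<notin> set qs) ps @ filter (\<lambda>p. p \<notin> set ps) qs) y"
  shows "prodphase lab ps (symd x Z) / prodphase lab ps x = prodphase lab qs (symd x Z) / prodphase lab qs x"
proof -
  let ?g = "prodphase lab" and ?cs = "filter (\<lambda>p. p \<in> set qs) ps"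
  let ?ds = "filter (\<lambda>p. p \<notin> set qs) ps" and ?fs = "filter (\<lambda>p. p \<notin> set ps) qs"
  let ?ratio = "\<lambda>L y. ?g L (symd y Z) / ?g L y" and ?C = "xsum (alpha_p lab) ?cs"
  have "mset ps = mset (?cs @ ?ds)" "mset qs = mset (?cs @ ?fs)"
    using assms(1,2) by (subst set_eq_iff_mset_eq_distinct[symmetric]; auto)+
  moreover have "?ratio (?cs @ L) x = ?ratio ?cs x * ?ratio L (symd x ?C)" for L
    by (simp add: prodphase_append symd_assoc symd_commute[of Z "?C"])
  ultimately have "?ratio ps x = ?ratio ?cs x * ?ratio ?ds (symd x ?C)"
    "?ratio qs x = ?ratio ?cs x * ?ratio ?fs (symd x ?C)"
    using prodphase_mset_eq assms(3,4) by (metis (no_types, lifting) set_mset_mset)+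
  moreover have "?ratio ?ds y = ?ratio ?fs y" for y
    by (rule prodphase_ratio_eq_of_append_invariant) (use assms(3,4) inv in auto)
  ultimately show ?thesis by simp
qed

text \<open>If \<open>sl\<close> contains every plaquette reading \<open>e\<close>, the complementary plaquettes do not read \<open>e\<close>,
  and since the product over all plaquettes is the identity, the product over \<open>sl\<close> is the
  inverse of the product over the complement.\<close>

lemma prodphase_flip_edge:
  assumes "set sl \<subseteq> P" "distinct sl"
    and "{p \<in> P. e \<in> plaq_support lab p} \<subseteq> set sl \<or> {p \<in> P. e \<in> plaq_support lab p} \<inter> set sl = {}"
  shows "prodphase lab sl (symd x {e}) = prodphase lab sl x"
  using assms(3)
proof
  assume readers: "{p \<in> P. e \<in> plaq_support lab p} \<subseteq> set sl"
  obtain rl where rl: "distinct rl" "set rl = P - set sl"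
    using finite_distinct_list[of "P - set sl"] finite_P by blast
  have one: "prodphase lab sl y * prodphase lab rl (symd y (xsum (alpha_p lab) sl)) = 1" for y
    using prodphase_all_plaquettes[of "sl @ rl"] rl assms(1,2) by (auto simp: prodphase_append)
  have "prodphase lab rl (symd (symd x {e}) (xsum (alpha_p lab) sl))
      = prodphase lab rl (symd x (xsum (alpha_p lab) sl))"
    by (rule prodphase_cong_support) (use readers rl in \<open>auto simp: symd_def\<close>)
  then show ?thesis
    using one[of x] one[of "symd x {e}"] prodphase_nonzero[of lab rl] by (metis mult_right_cancel)
next
  assume "{p \<in> P. e \<in> plaq_support lab p} \<inter> set sl = {}"
  then show ?thesis
    by (intro prodphase_cong_support) (use assms(1) in \<open>auto simp: symd_def\<close>)
qed

lemma prodphase_flip_set: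
  assumes "set sl \<subseteq> P" "distinct sl" "finite Z"
    and "\<And>e. e \<in> Z \<Longrightarrow>
      {p \<in> P. e \<in> plaq_support lab p} \<subseteq> set sl \<or> {p \<in> P. e \<in> plaq_support lab p} \<inter> set sl = {}"
  shows "prodphase lab sl (symd x Z) = prodphase lab sl x"
  using assms(3,4)
proof (induction Z arbitrary: x rule: finite_induct)
  case (insert e Z)
  have "symd x (insert e Z) = symd (symd x Z) {e}"
    using insert.hyps by (auto simp: symd_def)
  then show ?case
    using prodphase_flip_edge[OF assms(1,2)] insert by simp
qed simp

subsection \<open>Geometry of the honeycomb\<close>

lemma ends_subset_V: "e \<in> E \<Longrightarrow> ends e \<subseteq> V"
  using honeycomb unfolding honeycomb_def by blast

lemma card_ends: "e \<in> E \<Longrightarrow> card (ends e) = 2"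
  using honeycomb unfolding honeycomb_def by blast

lemma card_edges_at_vertex: "v \<in> V \<Longrightarrow> card {e \<in> E. v \<in> ends e} = 3"
  using honeycomb unfolding honeycomb_def by blast

lemma inj_on_lab: "p \<in> P \<Longrightarrow> inj_on (lab p) {1..12}"
  using honeycomb unfolding honeycomb_def by blast

lemma distinct_map_lab: "p \<in> P \<Longrightarrow> set ks \<subseteq> {1..12} \<Longrightarrow> distinct ks \<Longrightarrow> distinct (map (lab p) ks)"
  using inj_on_lab inj_on_subset by (simp add: distinct_map) blast

lemma corner_nonempty:
  "p \<in> P \<Longrightarrow> j \<in> {1..6} \<Longrightarrow> ends (lab p (j + 6)) \<inter> ends (lab p j) \<inter> ends (lab p (nxt6 j)) \<noteq> {}"
  using honeycomb unfolding honeycomb_def by blast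

lemma card_faces: "e \<in> E \<Longrightarrow> card {p \<in> P. e \<in> alpha_p lab p} = 2"
  using honeycomb unfolding honeycomb_def alpha_p_def by blast

lemma edges_at_vertex:
  assumes "v \<in> V" "{a, b, c} \<subseteq> E" "distinct [a, b, c]" "v \<in> ends a" "v \<in> ends b" "v \<in> ends c"
  shows "{f \<in> E. v \<in> ends f} = {a, b, c}"
proof (rule card_subset_eq[symmetric])
  show "card {a, b, c} = card {f \<in> E. v \<in> ends f}"
    using card_edges_at_vertex assms(1,3) by auto
qed (use finite_E assms in auto)

lemma faces_of_edge:
  assumes "e \<in> E" "p \<in> P" "q \<in> P" "p \<noteq> q" "e \<in> alpha_p lab p" "e \<in> alpha_p lab q"
  shows "{r \<in> P. e \<in> alpha_p lab r} = {p, q}"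
  by (rule card_subset_eq[symmetric]) (use finite_P card_faces assms in auto)

text \<open>The two endpoints of a boundary edge are the corners it shares with the preceding and the
  following boundary edge; they differ since otherwise four edges would meet there.\<close>

lemma boundary_endpoint_on_neighbour:
  assumes p: "p \<in> P" and m: "m \<in> {1..6}" and w: "w \<in> ends (lab p m)"
  shows "w \<in> ends (lab p (nxt6 m)) \<or> w \<in> ends (lab p (prv6 m))"
proof -
  note ix = nxt6_prv6[OF m]
  obtain c1 where c1: "c1 \<in> ends (lab p (m + 6))" "c1 \<in> ends (lab p m)" "c1 \<in> ends (lab p (nxt6 m))"
    using corner_nonempty[OF p m] by blast
  obtain c0 where c0: "c0 \<in> ends (lab p (prv6 m))" "c0 \<in> ends (lab p m)"
    using corner_nonempty[OF p ix(2)] ix(3) by auto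
  have idx: "set [m, nxt6 m, m + 6, prv6 m] \<subseteq> {1..12}" "distinct [m, nxt6 m, m + 6, prv6 m]"
    using m ix by auto
  then have distinct: "distinct [lab p m, lab p (nxt6 m), lab p (m + 6), lab p (prv6 m)]"
    using distinct_map_lab[OF p] by fastforce
  have E: "{lab p m, lab p (nxt6 m), lab p (m + 6), lab p (prv6 m)} \<subseteq> E"
    using idx(1) lab_in_E[OF p] by auto
  have "c0 \<noteq> c1"
  proof
    assume "c0 = c1"
    have "c1 \<in> V" using ends_subset_V E c1 by blast
    then have "{f \<in> E. c1 \<in> ends f} = {lab p m, lab p (nxt6 m), lab p (m + 6)}"
      by (intro edges_at_vertex) (use E c1 distinct in auto)
    moreover have "lab p (prv6 m) \<in> {f \<in> E. c1 \<in> ends f}"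
      using E c0 \<open>c0 = c1\<close> by auto
    ultimately show False using distinct by auto
  qed
  then have "ends (lab p m) = {c0, c1}"
    using card_ends E c0 c1 by (metis card_2_iff doubleton_eq_iff insertE insert_subset singletonD)
  then show ?thesis using w c0 c1 by auto
qed

text \<open>An outgoing edge \<open>e\<close> of \<open>p\<close> is a boundary edge of a face \<open>p'\<close>, and at the corner of \<open>p\<close>
  where \<open>e\<close> starts, the boundary of \<open>p'\<close> continues along a boundary edge of \<open>p\<close>.\<close>

lemma outgoing_edge_meets_common_boundary:
  assumes p: "p \<in> P" and j: "j \<in> {1..6}" and p': "p' \<in> P" and e: "lab p (j + 6) \<in> alpha_p lab p'"
  shows "p \<noteq> p' \<and> (\<exists>g \<in> E. g \<in> alpha_p lab p \<and> g \<in> alpha_p lab p' \<and>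
           ends (lab p (j + 6)) \<inter> ends g \<noteq> {})"
proof -
  let ?e = "lab p (j + 6)"
  note ixj = nxt6_prv6[OF j]
  obtain w where w: "w \<in> ends ?e" "w \<in> ends (lab p j)" "w \<in> ends (lab p (nxt6 j))"
    using corner_nonempty[OF p j] by blast
  obtain m where m: "m \<in> {1..6}" "?e = lab p' m"
    using e unfolding alpha_p_def by blast
  note ixm = nxt6_prv6[OF m(1)]
  have "w \<in> ends (lab p' m)"
    using w(1) m(2) by simp
  then obtain g where g: "g \<in> {lab p' (nxt6 m), lab p' (prv6 m)}" "w \<in> ends g"
    using boundary_endpoint_on_neighbour[OF p' m(1)] by blast
  have gE: "g \<in> E" and gp': "g \<in> alpha_p lab p'"
    using g lab_in_E[OF p'] ixm unfolding alpha_p_def by auto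
  have "distinct (map (lab p') [m, nxt6 m, prv6 m])"
    by (rule distinct_map_lab[OF p']) (use m ixm in auto)
  then have "g \<noteq> ?e"
    using g m(2) by auto
  have "distinct (map (lab p) [j + 6, j, nxt6 j])"
    by (rule distinct_map_lab[OF p]) (use j ixj in auto)
  moreover have E: "{?e, lab p j, lab p (nxt6 j)} \<subseteq> E"
    using lab_in_E[OF p] j ixj by auto
  moreover have "w \<in> V" using ends_subset_V E w by blast
  ultimately have "{f \<in> E. w \<in> ends f} = {?e, lab p j, lab p (nxt6 j)}"
    by (intro edges_at_vertex) (use w in auto)
  then have "g \<in> alpha_p lab p"
    using gE g \<open>g \<noteq> ?e\<close> j ixj unfolding alpha_p_def by auto
  moreover have "p \<noteq> p'"
  proof
    assume "p = p'"
    then have "j + 6 = m"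
      using m inj_on_lab[OF p] j by (auto dest: inj_onD)
    then show False using j m(1) by auto
  qed
  ultimately show ?thesis using gE gp' g w by blast
qed

text \<open>Each plaquette reading \<open>e\<close> is a face of \<open>e\<close>, or shares with a face of \<open>e\<close> a boundary edge
  touching \<open>e\<close>.\<close>

lemma readers_uniform:
  assumes "e \<in> E"
    and closed: "\<And>g a b. g \<in> E \<Longrightarrow> g = e \<or> ends e \<inter> ends g \<noteq> {} \<Longrightarrow> a \<in> P \<Longrightarrow> b \<in> P \<Longrightarrow> a \<noteq> b
        \<Longrightarrow> g \<in> alpha_p lab a \<Longrightarrow> g \<in> alpha_p lab b \<Longrightarrow> a \<in> S \<longleftrightarrow> b \<in> S"
  shows "{p \<in> P. e \<in> plaq_support lab p} \<subseteq> S \<or> {p \<in> P. e \<in> plaq_support lab p} \<inter> S = {}"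
proof -
  have "{p \<in> P. e \<in> alpha_p lab p} \<noteq> {}"
    using card_faces[OF assms(1)] by (metis card.empty zero_neq_numeral)
  then obtain p' where p': "p' \<in> P" "e \<in> alpha_p lab p'"
    by blast
  have "p \<in> S \<longleftrightarrow> p' \<in> S" if p: "p \<in> P" "e \<in> plaq_support lab p" for p
  proof (cases "e \<in> alpha_p lab p")
    case True
    then show ?thesis using closed[OF assms(1)] p p' by blast
  next
    case False
    then obtain j where "j \<in> {1..6}" "e = lab p (j + 6)"
      using p(2) unfolding plaq_support_eq by blast
    then obtain g where "g \<in> E" "g \<in> alpha_p lab p" "g \<in> alpha_p lab p'" "ends e \<inter> ends g \<noteq> {}"
      "p \<noteq> p'"
      using outgoing_edge_meets_common_boundary[OF p(1) _ p'(1)] p'(2) by blast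
    then show ?thesis
      using closed p(1) p'(1) by blast
  qed
  then show ?thesis by blast
qed

lemma mem_xsum_iff_faces:
  assumes "distinct ps" "set ps \<subseteq> P" "g \<in> E" "a \<in> P" "b \<in> P" "a \<noteq> b"
    "g \<in> alpha_p lab a" "g \<in> alpha_p lab b"
  shows "g \<in> xsum (alpha_p lab) ps \<longleftrightarrow> (a \<in> set ps) \<noteq> (b \<in> set ps)"
proof -
  have "set (filter (\<lambda>p. g \<in> alpha_p lab p) ps) = set ps \<inter> {a, b}"
    using faces_of_edge[of g a b] assms by auto
  then have "length (filter (\<lambda>p. g \<in> alpha_p lab p) ps) = card (set ps \<inter> {a, b})"
    using assms(1) by (metis distinct_card distinct_filter)
  then show ?thesis
    using assms(6) by (cases "a \<in> set ps"; cases "b \<in> set ps") (auto simp: xsum_eq_odd_count)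
qed

lemma faces_same_side_of_symd:
  assumes "distinct ps" "distinct qs" "set ps \<subseteq> P" "set qs \<subseteq> P"
    and "xsum (alpha_p lab) ps \<inter> C = xsum (alpha_p lab) qs \<inter> C"
    and "g \<in> C" "g \<in> E" "a \<in> P" "b \<in> P" "a \<noteq> b" "g \<in> alpha_p lab a" "g \<in> alpha_p lab b"
  shows "a \<in> symd (set ps) (set qs) \<longleftrightarrow> b \<in> symd (set ps) (set qs)"
proof -
  have "g \<in> xsum (alpha_p lab) ps \<longleftrightarrow> g \<in> xsum (alpha_p lab) qs"
    using assms(5,6) by blast
  then have "((a \<in> set ps) \<noteq> (b \<in> set ps)) = ((a \<in> set qs) \<noteq> (b \<in> set qs))"
    using mem_xsum_iff_faces[OF assms(1,3,7-12)] mem_xsum_iff_faces[OF assms(2,4,7-12)] by simp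
  then show ?thesis
    unfolding symd_def by blast
qed

lemma prodphase_flip_path:
  assumes "set sl \<subseteq> P" "distinct sl" "set path \<subseteq> E"
    and closed: "\<And>g a b. g \<in> Conn E ends path \<Longrightarrow> a \<in> P \<Longrightarrow> b \<in> P \<Longrightarrow> a \<noteq> b
        \<Longrightarrow> g \<in> alpha_p lab a \<Longrightarrow> g \<in> alpha_p lab b \<Longrightarrow> a \<in> set sl \<longleftrightarrow> b \<in> set sl"
  shows "prodphase lab sl (symd x (alpha_path path)) = prodphase lab sl x"
proof (rule prodphase_flip_set[OF assms(1,2)])
  show "finite (alpha_path path)"
    using alpha_path_subset by (rule finite_subset) simp
next
  fix e assume "e \<in> alpha_path path"
  then have e: "e \<in> set path" "e \<in> E"
    using alpha_path_subset[of path] assms(3) by (simp_all add: subset_iff)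
  show "{p \<in> P. e \<in> plaq_support lab p} \<subseteq> set sl \<or> {p \<in> P. e \<in> plaq_support lab p} \<inter> set sl = {}"
  proof (rule readers_uniform[OF e(2)])
    fix g a b
    assume g: "g \<in> E" "g = e \<or> ends e \<inter> ends g \<noteq> {}"
      and ab: "a \<in> P" "b \<in> P" "a \<noteq> b" "g \<in> alpha_p lab a" "g \<in> alpha_p lab b"
    have "g \<in> Conn E ends path"
      using g e(1) unfolding Conn_def by blast
    then show "a \<in> set sl \<longleftrightarrow> b \<in> set sl"
      by (rule closed[OF _ ab])
  qed
qed

end

theorem lemma2:
  fixes V :: "'v set" and E :: "'e set" and P :: "'p set"
    and ends :: "'e \<Rightarrow> 'v set" and lab :: "'p \<Rightarrow> nat \<Rightarrow> 'e"
    and path :: "'e list" and ps qs :: "'p list"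
  assumes "honeycomb V E P ends lab"
    and "B_commute E P lab" and "B_square_id E P lab" and "B_product_id E P lab"
    and "is_walk E ends path"
    and "distinct ps" and "distinct qs"
    and "set ps \<subseteq> Bplaq E P ends lab path" and "set qs \<subseteq> Bplaq E P ends lab path"
    and "set ps \<noteq> set qs"
    and "xsum (alpha_p lab) ps \<inter> Conn E ends path = xsum (alpha_p lab) qs \<inter> Conn E ends path"
  shows "\<forall>i. i \<subseteq> E \<longrightarrow> theta lab path i ps = theta lab path i qs"
proof -
  interpret honeycomb_plaquettes V E P ends lab
    using assms(1-4) by unfold_locales
  define sl where "sl = filter (\<lambda>p. p \<notin> set qs) ps @ filter (\<lambda>p. p \<notin> set ps) qs"
  have P: "set ps \<subseteq> P" "set qs \<subseteq> P"
    using assms(8,9) unfolding Bplaq_def by auto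
  have sl: "set sl = symd (set ps) (set qs)" "distinct sl"
    using assms(6,7) unfolding sl_def symd_def by (auto simp: disjoint_iff)
  have path_E: "set path \<subseteq> E"
    using assms(5) unfolding is_walk_def by (auto simp: in_set_conv_nth)
  have "prodphase lab sl (symd y (alpha_path path)) = prodphase lab sl y" for y
  proof (rule prodphase_flip_path[OF _ sl(2) path_E])
    show "set sl \<subseteq> P"
      using P unfolding sl(1) symd_def by blast
    fix g a b
    assume "g \<in> Conn E ends path" "a \<in> P" "b \<in> P" "a \<noteq> b" "g \<in> alpha_p lab a" "g \<in> alpha_p lab b"
    then show "a \<in> set sl \<longleftrightarrow> b \<in> set sl"
      unfolding sl(1)
      using faces_same_side_of_symd[OF assms(6,7) P assms(11)] Conn_subset[OF path_E] by blast
  qed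
  then show ?thesis
    unfolding theta_eq_prodphase_ratio sl_def
    using prodphase_ratio_eq_of_difference_invariant assms(6,7) P by blast
qed

end
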